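(* Let $K$ be the set of separable states of $\mathcal{B}(\mathbb{C}^2\otimes\mathbb{C}^2)$. Then the pure states $|01\rangle\langle01|$ and $|10\rangle\langle10|$ are not superposable in $K$.
   Context: States of $\mathcal{B}(\mathbb{C}^2\otimes\mathbb{C}^2)$ are identified with density operators on $\mathbb{C}^2\otimes\mathbb{C}^2$; a pure product state is $E\otimes F$ with $E,F$ rank-one projections on $\mathbb{C}^2$, and $K$ is the set of convex combinations of pure product states. $\{|0\rangle,|1\rangle\}$ is the standard orthonormal basis of $\mathbb{C}^2$ and $|ab\rangle=|a\rangle\otimes|b\rangle$. For a convex set $K$, $A(K)$ is the set of affine functions $K\to\mathbb{R}$, and for extreme points $x,y$ the affine ratio is $\langle x,y\rangle_K=\inf\{f(y): f\in A(K),\ \mathrm{range}(f)\subseteq[0,1],\ f(x)=1\}$. Extreme points $x,y$ are orthogonal if $\langle x,y\rangle_K=0$; orthogonal extreme points $x,y$ are superposable in $K$ if there is an extreme point $z$ of $K$ with $\langle x,z\rangle_K=\tfrac12=\langle y,z\rangle_K$. *)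

theory Defs
  imports "HOL-Analysis.Analysis"
begin

text \<open>Operators on C^2 are complex^2^2; operators on C^2 (x) C^2 are indexed by
  the pair type 2 \<times> 2, i.e. complex^(2\<times>2)^(2\<times>2).\<close>

definition ket :: "2 \<Rightarrow> complex ^ 2" where
  "ket a = axis a 1"

definition kron_vec :: "complex ^ 'a \<Rightarrow> complex ^ 'b \<Rightarrow> complex ^ ('a \<times> 'b)" where
  "kron_vec u w = (\<chi> p. u $ fst p * w $ snd p)"

definition kron :: "complex ^ 'a ^ 'a \<Rightarrow> complex ^ 'b ^ 'b \<Rightarrow> complex ^ ('a \<times> 'b) ^ ('a \<times> 'b)" where
  "kron A B = (\<chi> p q. A $ fst p $ fst q * B $ snd p $ snd q)"

definition outer :: "complex ^ 'n \<Rightarrow> complex ^ 'n ^ 'n" where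
  "outer v = (\<chi> i j. v $ i * cnj (v $ j))"

definition rank_one_proj :: "complex ^ 2 ^ 2 \<Rightarrow> bool" where
  "rank_one_proj E \<longleftrightarrow> (\<exists>v. norm v = 1 \<and> E = outer v)"

definition pure_product_states :: "(complex ^ (2 \<times> 2) ^ (2 \<times> 2)) set" where
  "pure_product_states = {kron E F | E F. rank_one_proj E \<and> rank_one_proj F}"

definition separable_states :: "(complex ^ (2 \<times> 2) ^ (2 \<times> 2)) set" where
  "separable_states = convex hull pure_product_states"

definition affine_fun_on :: "'a::real_vector set \<Rightarrow> ('a \<Rightarrow> real) \<Rightarrow> bool" where
  "affine_fun_on K f \<longleftrightarrow>
     (\<forall>x\<in>K. \<forall>y\<in>K. \<forall>t::real. 0 \<le> t \<and> t \<le> 1 \<longrightarrow>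
        f ((1 - t) *\<^sub>R x + t *\<^sub>R y) = (1 - t) * f x + t * f y)"

definition affine_ratio :: "'a::real_vector set \<Rightarrow> 'a \<Rightarrow> 'a \<Rightarrow> real" where
  "affine_ratio K x y =
     Inf {f y | f. affine_fun_on K f \<and> f ` K \<subseteq> {0..1} \<and> f x = 1}"

definition orthogonal_ext :: "'a::real_vector set \<Rightarrow> 'a \<Rightarrow> 'a \<Rightarrow> bool" where
  "orthogonal_ext K x y \<longleftrightarrow>
     x extreme_point_of K \<and> y extreme_point_of K \<and> affine_ratio K x y = 0"

definition superposable :: "'a::real_vector set \<Rightarrow> 'a \<Rightarrow> 'a \<Rightarrow> bool" where
  "superposable K x y \<longleftrightarrow> orthogonal_ext K x y \<and>
     (\<exists>z. z extreme_point_of K \<and> affine_ratio K x z = 1/2 \<and> affine_ratio K y z = 1/2)"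

end

theory Submission
  imports Defs
begin

text \<open>The diagonal entry \<rho> \<mapsto> \<rho>(ab,ab) is an affine functional with values in [0,1] on the
  separable states; it equals 1 at the product basis state |ab><ab| and is strictly smaller at
  every other pure product state. Hence |ab><ab| is an exposed, in particular extreme, point of K,
  and the affine ratio <|ab><ab|, z> is at most z(ab,ab). This makes |01><01| and |10><10|
  orthogonal. A superposing extreme point would be a pure product state |v><v| (x) |w><w| with
  |v0|^2 |w1|^2 \<ge> 1/2 and |v1|^2 |w0|^2 \<ge> 1/2, which is impossible for unit vectors v, w.\<close>

lemma convex_insert_halfspace_lt:
  fixes x a :: "'a::real_inner"
  assumes "a \<bullet> x = b"
  shows "convex (insert x {y. a \<bullet> y < b})"
proof (rule convexI)
  fix y z and u v :: real
  assume y: "y \<in> insert x {y. a \<bullet> y < b}" and z: "z \<in> insert x {y. a \<bullet> y < b}"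
    and uv: "0 \<le> u" "0 \<le> v" "u + v = 1"
  show "u *\<^sub>R y + v *\<^sub>R z \<in> insert x {y. a \<bullet> y < b}"
  proof (cases "u = 0 \<or> v = 0")
    case True
    then have "u *\<^sub>R y + v *\<^sub>R z = z \<or> u *\<^sub>R y + v *\<^sub>R z = y"
      using uv(3) by auto
    then show ?thesis
      using y z by auto
  next
    case False
    then have uv_pos: "0 < u" "0 < v"
      using uv by auto
    show ?thesis
    proof (cases "y = x \<and> z = x")
      case True
      then show ?thesis
        using uv(3) by (simp flip: scaleR_add_left)
    next
      case False
      then have "a \<bullet> y < b \<and> a \<bullet> z \<le> b \<or> a \<bullet> y \<le> b \<and> a \<bullet> z < b"
        using y z assms by auto
      then have "u * (a \<bullet> y) + v * (a \<bullet> z) < u * b + v * b"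
        using uv_pos by (auto intro: add_less_le_mono add_le_less_mono)
      also have "u * b + v * b = b"
        using uv(3) by (metis distrib_right mult_1)
      finally show ?thesis
        by (simp add: inner_add_right)
    qed
  qed
qed

lemma extreme_point_of_convex_hull_unique_max:
  fixes x a :: "'a::real_inner"
  assumes "x \<in> S" "a \<bullet> x = b" "\<And>y. y \<in> S \<Longrightarrow> y \<noteq> x \<Longrightarrow> a \<bullet> y < b"
  shows "x extreme_point_of convex hull S"
proof (rule extreme_point_of_Int_supporting_hyperplane_le)
  have sub: "convex hull S \<subseteq> insert x {y. a \<bullet> y < b}"
    using assms by (intro hull_minimal convex_insert_halfspace_lt) auto
  then show "\<And>y. y \<in> convex hull S \<Longrightarrow> a \<bullet> y \<le> b"
    using assms(2) by fastforce
  show "convex hull S \<inter> {y. a \<bullet> y = b} = {x}"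
    using sub assms(1,2) hull_inc[of x S] by auto
qed

lemma affine_ratio_le:
  assumes "z \<in> K" "affine_fun_on K f" "f ` K \<subseteq> {0..1}" "f x = 1"
  shows "affine_ratio K x z \<le> f z"
  unfolding affine_ratio_def
proof (rule cInf_lower)
  show "f z \<in> {f z |f. affine_fun_on K f \<and> f ` K \<subseteq> {0..1} \<and> f x = 1}"
    using assms by blast
  show "bdd_below {f z |f. affine_fun_on K f \<and> f ` K \<subseteq> {0..1} \<and> f x = 1}"
    using assms(1) by (auto intro!: bdd_belowI[where m = 0])
qed

lemma affine_ratio_nonneg:
  assumes "z \<in> K"
  shows "0 \<le> affine_ratio K x z"
  unfolding affine_ratio_def
proof (rule cInf_greatest)
  have "affine_fun_on K (\<lambda>_. 1)"
    by (simp add: affine_fun_on_def)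
  then have "1 \<in> {f z |f. affine_fun_on K f \<and> f ` K \<subseteq> {0..1} \<and> f x = 1}"
    by fastforce
  then show "{f z |f. affine_fun_on K f \<and> f ` K \<subseteq> {0..1} \<and> f x = 1} \<noteq> {}"
    by blast
qed (use assms in auto)

lemma not_both_products_ge_half:
  fixes p q p' q' :: real
  assumes "0 \<le> p" "0 \<le> q" "0 \<le> p'" "0 \<le> q'" "p + p' \<le> 1" "q + q' \<le> 1"
  shows "p * q < 1/2 \<or> p' * q' < 1/2"
proof (rule ccontr)
  assume "\<not> ?thesis"
  then have ge: "1/2 \<le> p * q" "1/2 \<le> p' * q'" by auto
  have "p * q \<le> p" "p * q \<le> q" "p' * q' \<le> p'" "p' * q' \<le> q'"
    using assms by (simp_all add: mult_left_le mult_left_le_one_le)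
  with ge assms have "p = 1/2" "q = 1/2" by linarith+
  with ge show False by simp
qed

lemma unit_interval_mult_eq_1:
  fixes p q :: real
  assumes "0 \<le> p" "p \<le> 1" "0 \<le> q" "q \<le> 1" "p * q = 1"
  shows "p = 1 \<and> q = 1"
  using mult_left_le[of q p] mult_left_le_one_le[of q p] assms by linarith

lemma sum_cmod_power2_eq_1:
  fixes v :: "complex ^ 'n"
  assumes "norm v = 1"
  shows "(\<Sum>i\<in>UNIV. (cmod (v $ i))\<^sup>2) = 1"
  using assms unfolding norm_vec_def L2_set_def by simp

lemma cmod_nth_le_1:
  fixes v :: "complex ^ 'n"
  assumes "norm v = 1"
  shows "cmod (v $ i) \<le> 1"
  using Finite_Cartesian_Product.norm_nth_le[of v i] assms by simp

lemma cmod_power2_add_le_1: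
  fixes v :: "complex ^ 'n"
  assumes "norm v = 1" "i \<noteq> j"
  shows "(cmod (v $ i))\<^sup>2 + (cmod (v $ j))\<^sup>2 \<le> 1"
proof -
  have "(\<Sum>k\<in>{i, j}. (cmod (v $ k))\<^sup>2) \<le> (\<Sum>k\<in>UNIV. (cmod (v $ k))\<^sup>2)"
    by (rule sum_mono2) auto
  then show ?thesis
    using assms by (simp add: sum_cmod_power2_eq_1)
qed

lemma outer_eq_outer_axis:
  fixes v :: "complex ^ 'n"
  assumes "norm v = 1" "cmod (v $ i) = 1"
  shows "outer v = outer (axis i 1)"
proof -
  have "(\<Sum>k\<in>UNIV - {i}. (cmod (v $ k))\<^sup>2) = 0"
    using sum_cmod_power2_eq_1[OF assms(1)] assms(2) sum.remove[of UNIV i "\<lambda>k. (cmod (v $ k))\<^sup>2"]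
    by simp
  then have "v $ k = 0" if "k \<noteq> i" for k
    using that by (subst (asm) sum_nonneg_eq_0_iff) auto
  moreover have "v $ i * cnj (v $ i) = 1"
    using assms(2) by (simp add: complex_norm_square[symmetric])
  ultimately show ?thesis
    by (auto simp: vec_eq_iff outer_def axis_def)
qed

lemma norm_ket: "norm (ket a) = 1"
  by (simp add: ket_def)

lemma outer_kron_vec: "outer (kron_vec u w) = kron (outer u) (outer w)"
  by (simp add: vec_eq_iff outer_def kron_def kron_vec_def algebra_simps)

lemma diag_kron_outer:
  "Re (kron (outer v) (outer w) $ (a, b) $ (a, b)) = (cmod (v $ a))\<^sup>2 * (cmod (w $ b))\<^sup>2"
proof -
  have "kron (outer v) (outer w) $ (a, b) $ (a, b) = of_real ((cmod (v $ a))\<^sup>2 * (cmod (w $ b))\<^sup>2)"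
    by (simp only: kron_def outer_def vec_lambda_beta fst_conv snd_conv complex_norm_square of_real_mult)
  then show ?thesis by simp
qed

definition diag_unit :: "'n \<Rightarrow> complex ^ 'n ^ 'n" where
  "diag_unit i = axis i (axis i 1)"

lemma inner_diag_unit: "diag_unit i \<bullet> \<rho> = Re (\<rho> $ i $ i)"
  by (subst inner_commute) (simp add: diag_unit_def inner_axis)

lemma pure_product_statesE:
  assumes "s \<in> pure_product_states"
  obtains v w where "norm v = 1" "norm w = 1" "s = kron (outer v) (outer w)"
  using assms unfolding pure_product_states_def rank_one_proj_def by blast

abbreviation basis_state :: "2 \<Rightarrow> 2 \<Rightarrow> complex ^ (2 \<times> 2) ^ (2 \<times> 2)" where
  "basis_state a b \<equiv> outer (kron_vec (ket a) (ket b))"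

lemma basis_state_in_pure_product_states: "basis_state a b \<in> pure_product_states"
  unfolding pure_product_states_def rank_one_proj_def outer_kron_vec using norm_ket by blast

lemma basis_state_diag:
  "Re (basis_state a b $ (a', b') $ (a', b')) = (if (a', b') = (a, b) then 1 else 0)"
  by (simp add: outer_def kron_vec_def ket_def axis_def)

lemma pure_product_state_diag_bounds:
  assumes "s \<in> pure_product_states"
  shows "0 \<le> Re (s $ p $ p) \<and> Re (s $ p $ p) \<le> 1"
proof -
  obtain v w where "norm v = 1" "norm w = 1" "s = kron (outer v) (outer w)"
    using assms by (rule pure_product_statesE)
  moreover obtain a b where "p = (a, b)" by fastforce
  moreover have "cmod (v $ a) \<le> 1" "cmod (w $ b) \<le> 1"
    using \<open>norm v = 1\<close> \<open>norm w = 1\<close> by (simp_all add: cmod_nth_le_1)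
  ultimately show ?thesis
    by (simp add: diag_kron_outer mult_le_one power_le_one)
qed

lemma pure_product_state_diag_eq_1:
  assumes "s \<in> pure_product_states" "Re (s $ (a, b) $ (a, b)) = 1"
  shows "s = basis_state a b"
proof -
  obtain v w where vw: "norm v = 1" "norm w = 1" "s = kron (outer v) (outer w)"
    using assms(1) by (rule pure_product_statesE)
  have "cmod (v $ a) \<le> 1" "cmod (w $ b) \<le> 1"
    using vw by (simp_all add: cmod_nth_le_1)
  moreover have "(cmod (v $ a))\<^sup>2 * (cmod (w $ b))\<^sup>2 = 1"
    using assms(2) vw(3) by (simp add: diag_kron_outer)
  ultimately have "(cmod (v $ a))\<^sup>2 = 1" "(cmod (w $ b))\<^sup>2 = 1"
    using unit_interval_mult_eq_1[of "(cmod (v $ a))\<^sup>2" "(cmod (w $ b))\<^sup>2"]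
    by (simp_all add: power_le_one)
  then have "cmod (v $ a) = 1" "cmod (w $ b) = 1"
    by (simp_all add: abs_square_eq_1)
  then show ?thesis
    using vw by (simp add: outer_kron_vec outer_eq_outer_axis ket_def)
qed

lemma pure_product_state_diag_lt_half:
  assumes "s \<in> pure_product_states" "a \<noteq> a'" "b \<noteq> b'"
  shows "Re (s $ (a, b) $ (a, b)) < 1/2 \<or> Re (s $ (a', b') $ (a', b')) < 1/2"
proof -
  obtain v w where vw: "norm v = 1" "norm w = 1" "s = kron (outer v) (outer w)"
    using assms(1) by (rule pure_product_statesE)
  have "(cmod (v $ a))\<^sup>2 + (cmod (v $ a'))\<^sup>2 \<le> 1" "(cmod (w $ b))\<^sup>2 + (cmod (w $ b'))\<^sup>2 \<le> 1"
    using vw assms(2,3) by (simp_all add: cmod_power2_add_le_1)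
  then show ?thesis
    using not_both_products_ge_half[OF zero_le_power2 zero_le_power2 zero_le_power2 zero_le_power2] vw(3)
    by (simp add: diag_kron_outer)
qed

lemma separable_state_diag_bounds:
  assumes "\<rho> \<in> separable_states"
  shows "0 \<le> Re (\<rho> $ p $ p) \<and> Re (\<rho> $ p $ p) \<le> 1"
proof -
  have "convex {\<rho>. 0 \<le> Re (\<rho> $ p $ p) \<and> Re (\<rho> $ p $ p) \<le> 1}"
    by (rule convexI) (auto intro!: convex_bound_le add_nonneg_nonneg)
  then have "separable_states \<subseteq> {\<rho>. 0 \<le> Re (\<rho> $ p $ p) \<and> Re (\<rho> $ p $ p) \<le> 1}"
    unfolding separable_states_def using pure_product_state_diag_bounds[where p = p]
    by (intro hull_minimal) auto
  with assms show ?thesis by blast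
qed

lemma basis_state_extreme_point: "basis_state a b extreme_point_of separable_states"
  unfolding separable_states_def
proof (rule extreme_point_of_convex_hull_unique_max)
  show "basis_state a b \<in> pure_product_states"
    by (rule basis_state_in_pure_product_states)
  show "diag_unit (a, b) \<bullet> basis_state a b = 1"
    by (simp add: inner_diag_unit basis_state_diag)
  show "diag_unit (a, b) \<bullet> s < 1" if "s \<in> pure_product_states" "s \<noteq> basis_state a b" for s
    using that pure_product_state_diag_bounds[of s "(a, b)"] pure_product_state_diag_eq_1[of s a b]
    by (force simp: inner_diag_unit)
qed

lemma affine_ratio_basis_state_le:
  assumes "z \<in> separable_states"
  shows "affine_ratio separable_states (basis_state a b) z \<le> Re (z $ (a, b) $ (a, b))"
proof (rule affine_ratio_le[OF assms])
  show "affine_fun_on separable_states (\<lambda>\<rho>. Re (\<rho> $ (a, b) $ (a, b)))"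
    by (simp add: affine_fun_on_def)
  show "(\<lambda>\<rho>. Re (\<rho> $ (a, b) $ (a, b))) ` separable_states \<subseteq> {0..1}"
    using separable_state_diag_bounds by auto
qed (simp add: basis_state_diag)

lemma orthogonal_ext_basis_states:
  assumes "(a, b) \<noteq> (a', b')"
  shows "orthogonal_ext separable_states (basis_state a b) (basis_state a' b')"
proof -
  have y: "basis_state a' b' \<in> separable_states"
    using basis_state_extreme_point extreme_point_of_def by blast
  have "Re (basis_state a' b' $ (a, b) $ (a, b)) = 0"
    using assms by (simp add: basis_state_diag)
  then have "affine_ratio separable_states (basis_state a b) (basis_state a' b') = 0"
    using affine_ratio_basis_state_le[OF y, of a b] affine_ratio_nonneg[OF y, of "basis_state a b"]
    by linarith
  then show ?thesis
    unfolding orthogonal_ext_def using basis_state_extreme_point by blast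
qed

lemma not_superposable_basis_states:
  assumes "a \<noteq> a'" "b \<noteq> b'"
  shows "\<not> superposable separable_states (basis_state a b) (basis_state a' b')"
proof -
  have False if "z extreme_point_of separable_states"
    "affine_ratio separable_states (basis_state a b) z = 1/2"
    "affine_ratio separable_states (basis_state a' b') z = 1/2" for z
  proof -
    have "z \<in> separable_states" "z \<in> pure_product_states"
      using that(1) extreme_point_of_convex_hull unfolding separable_states_def extreme_point_of_def
      by blast+
    then show False
      using that(2,3) affine_ratio_basis_state_le[of z a b] affine_ratio_basis_state_le[of z a' b']
        pure_product_state_diag_lt_half[of z a a' b b'] assms
      by linarith
  qed
  then show ?thesis
    unfolding superposable_def by blast
qed

theorem lemma3:
  shows "orthogonal_ext separable_states
            (outer (kron_vec (ket 0) (ket 1))) (outer (kron_vec (ket 1) (ket 0))) \<and>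
         \<not> superposable separable_states
            (outer (kron_vec (ket 0) (ket 1))) (outer (kron_vec (ket 1) (ket 0)))"
  using orthogonal_ext_basis_states[of 0 1 1 0] not_superposable_basis_states[of 0 1 1 0]
  by simp

end
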